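(* Let $m\ge2$, $r\ge1$, let $\phi_1,\dots,\phi_r:\{0,\dots,m-1\}\to\mathbb{R}$, and let $\Phi:\Sigma_m^r\to\mathbb{R}$ be $\Phi(x^{(1)},\dots,x^{(r)})=\phi_1(x^{(1)}_1)\cdots\phi_r(x^{(r)}_1)$. For a probability vector $p=(p_0,\dots,p_{m-1})$ let $A(p)=\int_{\Sigma_m^r}\Phi\,d\mu_p^{\otimes r}$. Then $$A(p)=\prod_{k=1}^r\sum_{j=0}^{m-1}\phi_k(j)p_j,$$ and for any $\alpha$ with $E_\Phi(\alpha)\neq\emptyset$, $$h_{\rm top}(E_\Phi(\alpha))=\max_{A(p)=\alpha}H_1(p),$$ the maximum being over all probability vectors $p$ with $A(p)=\alpha$.
   Context: $\Sigma_m=\{0,\dots,m-1\}^{\mathbb{N}}$ with left shift $\sigma$; for $x\in\Sigma_m$, $x_1$ is its first coordinate. $\mu_p$ is the Bernoulli (product) measure on $\Sigma_m$ with marginal $p$, and $\mu_p^{\otimes r}$ the $r$-fold product. $H_1(p)=-\sum_{j=0}^{m-1}p_j\log p_j$ (with $0\log0=0$). $E_\Phi(\alpha)=\{x\in\Sigma_m:\lim_{n\to\infty}n^{-r}\sum_{1\le i_1,\dots,i_r\le n}\Phi(\sigma^{i_1}x,\dots,\sigma^{i_r}x)=\alpha\}$. $h_{\rm top}(Z)$ is Bowen's topological entropy of $Z\subset\Sigma_m$: with $d_n(x,y)=\max_{0\le j<n}d(\sigma^jx,\sigma^jy)$, $H^s_n(Z,\epsilon)=\inf\sum_ie^{-sn_i}$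 over countable covers of $Z$ by $d_{n_i}$-balls of radius $\epsilon$ with $n_i\ge n$, $H^s(Z,\epsilon)=\lim_nH^s_n(Z,\epsilon)$, $h_{\rm top}(Z,\epsilon)$ the critical $s$, $h_{\rm top}(Z)=\lim_{\epsilon\to0}h_{\rm top}(Z,\epsilon)$. *)

theory Defs
  imports "HOL-Probability.Probability"
begin

text \<open>Full shift on m symbols: sequences indexed by nat; coordinate 0 is the
  paper's first coordinate x_1.\<close>
definition Sigma :: "nat \<Rightarrow> (nat \<Rightarrow> nat) set" where
  "Sigma m = {x. \<forall>i. x i < m}"

definition shift :: "(nat \<Rightarrow> nat) \<Rightarrow> (nat \<Rightarrow> nat)" where
  "shift x = (\<lambda>i. x (Suc i))"

definition sdist :: "(nat \<Rightarrow> nat) \<Rightarrow> (nat \<Rightarrow> nat) \<Rightarrow> real" where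
  "sdist x y = (if x = y then 0 else (1/2) ^ (LEAST i. x i \<noteq> y i))"

definition bowen_dist :: "nat \<Rightarrow> (nat \<Rightarrow> nat) \<Rightarrow> (nat \<Rightarrow> nat) \<Rightarrow> real" where
  "bowen_dist n x y = Max (insert 0 ((\<lambda>j. sdist ((shift ^^ j) x) ((shift ^^ j) y)) ` {..<n}))"

definition bowen_ball :: "nat \<Rightarrow> nat \<Rightarrow> (nat \<Rightarrow> nat) \<Rightarrow> real \<Rightarrow> (nat \<Rightarrow> nat) set" where
  "bowen_ball m n x eps = {y \<in> Sigma m. bowen_dist n x y < eps}"

definition bowen_Hn :: "nat \<Rightarrow> (nat \<Rightarrow> nat) set \<Rightarrow> real \<Rightarrow> real \<Rightarrow> nat \<Rightarrow> ennreal" where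
  "bowen_Hn m Z s eps n =
     (INF C \<in> {C. countable C \<and> C \<subseteq> Sigma m \<times> {n..} \<and>
                  Z \<subseteq> (\<Union>(x,k)\<in>C. bowen_ball m k x eps)}.
        (\<Sum>\<^sub>\<infinity>(x,k)\<in>C. ennreal (exp (- s * real k))))"

text \<open>H^s(Z,eps) = lim_n H^s_n(Z,eps) (nondecreasing in n).\<close>
definition bowen_H :: "nat \<Rightarrow> (nat \<Rightarrow> nat) set \<Rightarrow> real \<Rightarrow> real \<Rightarrow> ennreal" where
  "bowen_H m Z s eps = lim (\<lambda>n. bowen_Hn m Z s eps n)"

definition htop_eps :: "nat \<Rightarrow> (nat \<Rightarrow> nat) set \<Rightarrow> real \<Rightarrow> ereal" where
  "htop_eps m Z eps = Inf {ereal s | s. bowen_H m Z s eps = 0}"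

definition htop :: "nat \<Rightarrow> (nat \<Rightarrow> nat) set \<Rightarrow> ereal" where
  "htop m Z = Lim (at_right 0) (\<lambda>eps. htop_eps m Z eps)"

definition prob_vec :: "nat \<Rightarrow> (nat \<Rightarrow> real) \<Rightarrow> bool" where
  "prob_vec m p \<longleftrightarrow> (\<forall>j<m. 0 \<le> p j) \<and> (\<Sum>j<m. p j) = 1"

definition H1 :: "nat \<Rightarrow> (nat \<Rightarrow> real) \<Rightarrow> real" where
  "H1 m p = - (\<Sum>j<m. if p j = 0 then 0 else p j * ln (p j))"

definition bernoulli :: "nat \<Rightarrow> (nat \<Rightarrow> real) \<Rightarrow> (nat \<Rightarrow> nat) measure" where
  "bernoulli m p = PiM UNIV (\<lambda>_. density (count_space {..<m}) (\<lambda>j. ennreal (p j)))"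

text \<open>Phi(x^(1),...,x^(r)) = prod_k phi_k(x^(k)_1); phi indexed by k < r.\<close>
definition Phi :: "nat \<Rightarrow> (nat \<Rightarrow> nat \<Rightarrow> real) \<Rightarrow> (nat \<Rightarrow> nat \<Rightarrow> nat) \<Rightarrow> real" where
  "Phi r phi xs = (\<Prod>k<r. phi k (xs k 0))"

definition Aint :: "nat \<Rightarrow> nat \<Rightarrow> (nat \<Rightarrow> nat \<Rightarrow> real) \<Rightarrow> (nat \<Rightarrow> real) \<Rightarrow> real" where
  "Aint m r phi p = integral\<^sup>L (PiM {..<r} (\<lambda>_. bernoulli m p)) (Phi r phi)"

definition E_level :: "nat \<Rightarrow> nat \<Rightarrow> (nat \<Rightarrow> nat \<Rightarrow> real) \<Rightarrow> real \<Rightarrow> (nat \<Rightarrow> nat) set" where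
  "E_level m r phi alpha = {x \<in> Sigma m.
     (\<lambda>n. (1 / real n ^ r) *
        (\<Sum>i\<in>PiE {..<r} (\<lambda>_. {1..n}). Phi r phi (\<lambda>k. (shift ^^ (i k)) x)))
     \<longlonglongrightarrow> alpha}"

end

theory Submission
  imports Defs "HOL-Real_Asymp.Real_Asymp"
begin

text \<open>The multiple ergodic average of \<open>\<Phi>\<close> along \<open>x\<close> factorises: it equals \<open>A(f\<^sub>n(x))\<close>, where
  \<open>f\<^sub>n(x)\<close> is the vector of digit frequencies of \<open>x\<^sub>1 \<dots> x\<^sub>n\<close> and \<open>A(q) = \<Prod>\<^sub>k \<Sum>\<^sub>j \<phi>\<^sub>k(j) q\<^sub>j\<close>.
  So \<open>E\<^sub>\<Phi>(\<alpha>)\<close> consists of the points whose frequency vectors approach the level set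
  \<open>A = \<alpha>\<close>; by compactness this level set contains a vector \<open>p\<close> of maximal entropy, and by
  upper semicontinuity points of \<open>E\<^sub>\<Phi>(\<alpha>)\<close> eventually have empirical entropy below
  \<open>H(p) + \<delta>\<close>. Since there are only about \<open>e\<^sup>n\<^sup>t\<close> words of length \<open>n\<close> and empirical entropy
  at most \<open>t\<close>, this gives \<open>h\<^sub>t\<^sub>o\<^sub>p(E\<^sub>\<Phi>(\<alpha>)) \<le> H(p)\<close>. Conversely, by Hoeffding's inequality
  the \<open>\<mu>\<^sub>p\<close>-typical points lie in \<open>E\<^sub>\<Phi>(\<alpha>)\<close> and their cylinders of length \<open>n\<close> have mass
  \<open>e\<^sup>-\<^sup>n\<^sup>(\<^sup>H\<^sup>(\<^sup>p\<^sup>)\<^sup>-\<^sup>o\<^sup>(\<^sup>1\<^sup>)\<^sup>)\<close>, so the mass distribution principle gives \<open>h\<^sub>t\<^sub>o\<^sub>p(E\<^sub>\<Phi>(\<alpha>)) \<ge> H(p)\<close>.\<close>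

section \<open>Bernoulli measures\<close>

definition marginal :: "nat \<Rightarrow> (nat \<Rightarrow> real) \<Rightarrow> nat measure" where
  "marginal m p = density (count_space {..<m}) (\<lambda>j. ennreal (p j))"

lemma bernoulli_eq_PiM_marginal: "bernoulli m p = PiM UNIV (\<lambda>_. marginal m p)"
  by (simp add: bernoulli_def marginal_def)

lemma space_marginal [simp]: "space (marginal m p) = {..<m}"
  by (simp add: marginal_def)

lemma sets_marginal [simp]: "sets (marginal m p) = Pow {..<m}"
  by (simp add: marginal_def)

lemma emeasure_marginal_singleton:
  assumes "j < m"
  shows "emeasure (marginal m p) {j} = ennreal (p j)"
  using assms by (simp add: marginal_def emeasure_density nn_integral_count_space_finite)

lemma prob_vec_nonneg: "prob_vec m p \<Longrightarrow> j < m \<Longrightarrow> 0 \<le> p j"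
  by (simp add: prob_vec_def)

lemma prob_vec_le_1:
  assumes "prob_vec m p" "j < m"
  shows "p j \<le> 1"
proof -
  have "p j \<le> (\<Sum>i<m. p i)"
    using assms by (intro member_le_sum) (auto simp: prob_vec_def)
  then show ?thesis
    using assms by (simp add: prob_vec_def)
qed

lemma prob_space_marginal:
  assumes "prob_vec m p"
  shows "prob_space (marginal m p)"
proof
  have "emeasure (marginal m p) (space (marginal m p)) = (\<Sum>j<m. ennreal (p j))"
    by (simp add: marginal_def emeasure_density nn_integral_count_space_finite)
  also have "\<dots> = ennreal (\<Sum>j<m. p j)"
    using assms by (intro sum_ennreal) (auto simp: prob_vec_def)
  finally show "emeasure (marginal m p) (space (marginal m p)) = 1"
    using assms by (simp add: prob_vec_def)
qed

lemma prob_space_bernoulli: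
  assumes "prob_vec m p"
  shows "prob_space (bernoulli m p)"
  unfolding bernoulli_eq_PiM_marginal by (rule prob_space_PiM) (rule prob_space_marginal[OF assms])

lemma space_bernoulli: "space (bernoulli m p) = Sigma m"
  by (auto simp: bernoulli_eq_PiM_marginal space_PiM Sigma_def PiE_def Pi_def extensional_def)

lemma measurable_coordinate_bernoulli: "(\<lambda>x. x i) \<in> measurable (bernoulli m p) (marginal m p)"
  unfolding bernoulli_eq_PiM_marginal by (rule measurable_component_singleton) simp

lemma borel_measurable_marginal: "(f :: nat \<Rightarrow> real) \<in> borel_measurable (marginal m p)"
  unfolding marginal_def by (simp add: measurable_count_space_eq1)

lemma distr_coordinate_bernoulli:
  assumes "prob_vec m p"
  shows "distr (bernoulli m p) (marginal m p) (\<lambda>x. x i) = marginal m p"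
proof -
  interpret prob_space "marginal m p" using prob_space_marginal[OF assms] .
  interpret product_prob_space "\<lambda>_. marginal m p" UNIV by unfold_locales
  show ?thesis unfolding bernoulli_eq_PiM_marginal by (rule PiM_component) simp
qed

lemma integral_marginal:
  fixes f :: "nat \<Rightarrow> real"
  assumes "prob_vec m p"
  shows "integral\<^sup>L (marginal m p) f = (\<Sum>j<m. f j * p j)"
proof -
  have "integral\<^sup>L (marginal m p) f = integral\<^sup>L (count_space {..<m}) (\<lambda>j. p j *\<^sub>R f j)"
    unfolding marginal_def by (rule integral_density) (use assms in \<open>auto simp: prob_vec_def\<close>)
  then show ?thesis
    by (simp add: lebesgue_integral_count_space_finite mult.commute)
qed

lemma integral_bernoulli_coordinate:
  fixes f :: "nat \<Rightarrow> real"
  assumes "prob_vec m p"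
  shows "integral\<^sup>L (bernoulli m p) (\<lambda>x. f (x i)) = (\<Sum>j<m. f j * p j)"
proof -
  have "integral\<^sup>L (bernoulli m p) (\<lambda>x. f (x i))
        = integral\<^sup>L (distr (bernoulli m p) (marginal m p) (\<lambda>x. x i)) f"
    by (rule integral_distr[symmetric])
       (auto intro: measurable_coordinate_bernoulli borel_measurable_marginal)
  then show ?thesis
    by (simp add: distr_coordinate_bernoulli integral_marginal assms)
qed

lemma integrable_bernoulli_coordinate:
  fixes f :: "nat \<Rightarrow> real"
  assumes "prob_vec m p"
  shows "integrable (bernoulli m p) (\<lambda>x. f (x i))"
proof -
  interpret prob_space "marginal m p" using prob_space_marginal[OF assms] .
  have "integrable (marginal m p) f"
    by (rule integrable_const_bound[where B="\<Sum>j<m. \<bar>f j\<bar>"])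
       (auto intro!: AE_I2 member_le_sum borel_measurable_marginal)
  then have "integrable (distr (bernoulli m p) (marginal m p) (\<lambda>x. x i)) f"
    by (simp add: distr_coordinate_bernoulli assms)
  then show ?thesis
    by (subst (asm) integrable_distr_eq)
       (auto intro: measurable_coordinate_bernoulli borel_measurable_marginal)
qed

definition Aprod :: "nat \<Rightarrow> nat \<Rightarrow> (nat \<Rightarrow> nat \<Rightarrow> real) \<Rightarrow> (nat \<Rightarrow> real) \<Rightarrow> real" where
  "Aprod m r phi q = (\<Prod>k<r. \<Sum>j<m. phi k j * q j)"

lemma Aint_eq_Aprod:
  assumes "prob_vec m p"
  shows "Aint m r phi p = Aprod m r phi p"
proof -
  interpret prob_space "bernoulli m p" using prob_space_bernoulli[OF assms] .
  interpret product_sigma_finite "\<lambda>_. bernoulli m p" by unfold_locales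
  have "Aint m r phi p
        = (\<integral>xs. (\<Prod>k\<in>{..<r}. phi k (xs k 0)) \<partial>PiM {..<r} (\<lambda>_. bernoulli m p))"
    by (simp add: Aint_def Phi_def[abs_def])
  also have "\<dots> = (\<Prod>k<r. integral\<^sup>L (bernoulli m p) (\<lambda>x. phi k (x 0)))"
    by (rule product_integral_prod[where f="\<lambda>k x. phi k (x 0)"])
       (auto intro: integrable_bernoulli_coordinate[OF assms])
  finally show ?thesis
    by (simp add: integral_bernoulli_coordinate[OF assms] Aprod_def)
qed

section \<open>Empirical frequencies\<close>

text \<open>Frequencies are taken over the positions \<open>1..n\<close>, matching the range of the
  shifts \<open>\<sigma>\<^sup>i\<close> in the ergodic averages.\<close>

definition digit_count :: "nat \<Rightarrow> (nat \<Rightarrow> nat) \<Rightarrow> nat \<Rightarrow> nat" where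
  "digit_count n x j = card {i \<in> {1..n}. x i = j}"

definition freq :: "nat \<Rightarrow> (nat \<Rightarrow> nat) \<Rightarrow> nat \<Rightarrow> real" where
  "freq n x j = real (digit_count n x j) / real n"

lemma H1_eq: "H1 m p = - (\<Sum>j<m. p j * ln (p j))"
  unfolding H1_def by (intro arg_cong[where f=uminus] sum.cong) auto

lemma sum_by_digit:
  fixes f :: "nat \<Rightarrow> 'a::comm_semiring_1"
  assumes "finite I" "x ` I \<subseteq> {..<m}"
  shows "(\<Sum>i\<in>I. f (x i)) = (\<Sum>j<m. f j * of_nat (card {i\<in>I. x i = j}))"
proof -
  have "(\<Sum>i\<in>I. f (x i)) = (\<Sum>j<m. \<Sum>i\<in>{i\<in>I. x i = j}. f (x i))"
    by (rule sum.group[symmetric]) (use assms in auto)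
  then show ?thesis
    by (simp add: mult.commute)
qed

lemma prod_by_digit:
  fixes f :: "nat \<Rightarrow> 'a::comm_monoid_mult"
  assumes "finite I" "x ` I \<subseteq> {..<m}"
  shows "(\<Prod>i\<in>I. f (x i)) = (\<Prod>j<m. f j ^ card {i\<in>I. x i = j})"
proof -
  have "(\<Prod>i\<in>I. f (x i)) = (\<Prod>j<m. \<Prod>i\<in>{i\<in>I. x i = j}. f (x i))"
    by (rule prod.group[symmetric]) (use assms in auto)
  then show ?thesis
    by simp
qed

lemma digits_below: "x \<in> Sigma m \<Longrightarrow> x ` I \<subseteq> {..<m}"
  by (auto simp: Sigma_def)

lemma sum_freq_by_digit:
  fixes f :: "nat \<Rightarrow> real"
  assumes "x ` {1..n} \<subseteq> {..<m}"
  shows "(\<Sum>j<m. f j * freq n x j) = (\<Sum>i\<in>{1..n}. f (x i)) / real n"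
  using sum_by_digit[OF _ assms, of f]
  by (simp add: freq_def digit_count_def sum_divide_distrib)

lemma prob_vec_freq:
  assumes "x ` {1..n} \<subseteq> {..<m}" "n \<ge> 1"
  shows "prob_vec m (freq n x)"
  using sum_freq_by_digit[OF assms(1), of "\<lambda>_. 1"] assms(2)
  by (simp add: prob_vec_def freq_def)

lemma freq_cong:
  assumes "\<And>i. i \<in> {1..n} \<Longrightarrow> x i = y i"
  shows "freq n x = freq n y"
proof -
  have "{i \<in> {1..n}. x i = j} = {i \<in> {1..n}. y i = j}" for j
    using assms by auto
  then show ?thesis
    by (simp add: fun_eq_iff freq_def digit_count_def)
qed

lemma funpow_shift: "(shift ^^ j) x = (\<lambda>i. x (i + j))"
  by (induction j arbitrary: x) (simp_all add: shift_def funpow_Suc_right del: funpow.simps)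

lemma ergodic_average_eq_Aprod_freq:
  assumes "x \<in> Sigma m" "n \<ge> 1"
  shows "1 / real n ^ r * (\<Sum>i\<in>PiE {..<r} (\<lambda>_. {1..n}). Phi r phi (\<lambda>k. (shift ^^ i k) x))
         = Aprod m r phi (freq n x)"
proof -
  have "(\<Sum>i\<in>PiE {..<r} (\<lambda>_. {1..n}). Phi r phi (\<lambda>k. (shift ^^ i k) x))
        = (\<Sum>i\<in>PiE {..<r} (\<lambda>_. {1..n}). \<Prod>k<r. phi k (x (i k)))"
    by (simp add: Phi_def funpow_shift)
  also have "\<dots> = (\<Prod>k<r. \<Sum>i\<in>{1..n}. phi k (x i))"
    by (rule prod_sum_PiE[symmetric]) auto
  finally show ?thesis
    using sum_freq_by_digit[OF digits_below[OF assms(1)]]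
    by (simp add: Aprod_def prod_dividef)
qed

lemma E_level_eq_freq:
  "E_level m r phi alpha = {x \<in> Sigma m. (\<lambda>n. Aprod m r phi (freq n x)) \<longlonglongrightarrow> alpha}"
proof -
  have "(\<lambda>n. 1 / real n ^ r * (\<Sum>i\<in>PiE {..<r} (\<lambda>_. {1..n}). Phi r phi (\<lambda>k. (shift ^^ i k) x)))
          \<longlonglongrightarrow> alpha \<longleftrightarrow> (\<lambda>n. Aprod m r phi (freq n x)) \<longlonglongrightarrow> alpha"
    if "x \<in> Sigma m" for x
    by (intro tendsto_cong eventually_sequentiallyI[of 1] ergodic_average_eq_Aprod_freq that)
  then show ?thesis
    unfolding E_level_def by blast
qed

section \<open>Compactness of the simplex and continuity of entropy\<close>

lemma convergent_subseq_coordinates: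
  fixes q :: "nat \<Rightarrow> nat \<Rightarrow> 'a::metric_space"
  assumes "compact K" "\<And>n j. j < m \<Longrightarrow> q n j \<in> K"
  shows "\<exists>s l. strict_mono s \<and> (\<forall>j<m. (\<lambda>n. q (s n) j) \<longlonglongrightarrow> l j)"
  using assms(2)
proof (induction m)
  case 0
  show ?case
    by (auto intro: strict_mono_id)
next
  case (Suc m)
  then obtain s l where s: "strict_mono s" and l: "\<forall>j<m. (\<lambda>n. q (s n) j) \<longlonglongrightarrow> l j"
    by force
  obtain a s' where s': "strict_mono s'" and a: "((\<lambda>n. q (s n) m) \<circ> s') \<longlonglongrightarrow> a"
    using compact_imp_seq_compact[OF assms(1)] Suc.prems by (metis lessI seq_compactE)
  have "(\<lambda>n. q ((s \<circ> s') n) j) \<longlonglongrightarrow> (l(m := a)) j" if "j < Suc m" for j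
  proof (cases "j = m")
    case True
    then show ?thesis using a by (simp add: comp_def)
  next
    case False
    with that have "j < m" by simp
    then show ?thesis
      using LIMSEQ_subseq_LIMSEQ[OF l[rule_format] s'] False by (simp add: comp_def)
  qed
  then show ?case
    using strict_mono_o[OF s s'] by blast
qed

lemma prob_vec_convergent_subseq:
  fixes q :: "nat \<Rightarrow> nat \<Rightarrow> real"
  assumes "\<And>n. prob_vec m (q n)"
  obtains s l where "strict_mono s" "prob_vec m l" "\<forall>j<m. (\<lambda>n. q (s n) j) \<longlonglongrightarrow> l j"
proof -
  obtain s l where s: "strict_mono s" and l: "\<forall>j<m. (\<lambda>n. q (s n) j) \<longlonglongrightarrow> l j"
    using convergent_subseq_coordinates[OF compact_Icc, of m q 0 1]
    using assms prob_vec_nonneg prob_vec_le_1 by (metis atLeastAtMost_iff)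
  have "l j \<ge> 0" if "j < m" for j
    using l that assms by (intro LIMSEQ_le_const[of "\<lambda>n. q (s n) j"]) (auto simp: prob_vec_def)
  moreover have "(\<lambda>n. \<Sum>j<m. q (s n) j) \<longlonglongrightarrow> (\<Sum>j<m. l j)"
    using l by (intro tendsto_sum) auto
  then have "(\<Sum>j<m. l j) = 1"
    using assms by (simp add: prob_vec_def LIMSEQ_const_iff)
  ultimately show thesis
    using s l by (intro that[of s l]) (auto simp: prob_vec_def)
qed

lemma tendsto_Aprod:
  assumes "\<forall>j<m. (\<lambda>n. q n j) \<longlonglongrightarrow> l j"
  shows "(\<lambda>n. Aprod m r phi (q n)) \<longlonglongrightarrow> Aprod m r phi l"
  unfolding Aprod_def using assms by (intro tendsto_intros) auto

lemma continuous_on_x_ln_x: "continuous_on {0..} (\<lambda>t::real. t * ln t)"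
proof -
  have "continuous (at t within {0..}) (\<lambda>t::real. t * ln t)" if "t \<ge> 0" for t
  proof (cases "t = 0")
    case True
    have "((\<lambda>t::real. t * ln t) \<longlongrightarrow> 0) (at_right 0)"
      by real_asymp
    then show ?thesis
      using True by (simp add: continuous_within at_within_Ici_at_right)
  next
    case False
    then have "isCont (\<lambda>t::real. t * ln t) t"
      using that by (intro continuous_intros) auto
    then show ?thesis
      by (rule continuous_at_imp_continuous_at_within)
  qed
  then show ?thesis
    by (simp add: continuous_on_eq_continuous_within)
qed

lemma tendsto_H1:
  assumes "\<forall>j<m. (\<lambda>n. q n j) \<longlonglongrightarrow> l j" "\<And>n j. j < m \<Longrightarrow> q n j \<ge> 0"
  shows "(\<lambda>n. H1 m (q n)) \<longlonglongrightarrow> H1 m l"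
proof -
  have "(\<lambda>n. q n j * ln (q n j)) \<longlonglongrightarrow> l j * ln (l j)" if "j < m" for j
  proof -
    have "l j \<ge> 0"
      using assms that by (intro LIMSEQ_le_const[of "\<lambda>n. q n j"]) auto
    then show ?thesis
      using continuous_on_tendsto_compose[OF continuous_on_x_ln_x assms(1)[rule_format, OF that]] assms(2) that
      by auto
  qed
  then show ?thesis
    unfolding H1_eq by (intro tendsto_minus tendsto_sum) auto
qed

lemma H1_le_card:
  assumes "prob_vec m q"
  shows "H1 m q \<le> real m"
proof -
  have "- (q j * ln (q j)) \<le> 1" if "j < m" for j
  proof (cases "q j = 0")
    case False
    with that assms have q: "0 < q j" "q j \<le> 1"
      using prob_vec_nonneg prob_vec_le_1 by (auto simp: order_less_le)
    have "- ln (q j) \<le> 1 / q j - 1"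
      using ln_le_minus_one[of "1 / q j"] q by (simp add: ln_div)
    then have "q j * - ln (q j) \<le> q j * (1 / q j - 1)"
      using q by (intro mult_left_mono) auto
    also have "\<dots> = 1 - q j"
      using q by (simp add: field_simps)
    finally show ?thesis
      using q by simp
  qed simp
  then show ?thesis
    unfolding H1_eq using sum_mono[of "{..<m}" "\<lambda>j. - (q j * ln (q j))" "\<lambda>_. 1"]
    by (simp add: sum_negf)
qed

lemma Aprod_level_nonempty:
  assumes "x \<in> Sigma m" "(\<lambda>n. Aprod m r phi (freq n x)) \<longlonglongrightarrow> alpha"
  shows "\<exists>q. prob_vec m q \<and> Aprod m r phi q = alpha"
proof -
  have pv: "prob_vec m (freq (Suc n) x)" for n
    by (rule prob_vec_freq[OF digits_below[OF assms(1)]]) simp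
  obtain s l where s: "strict_mono s" and l: "prob_vec m l"
    and lim: "\<forall>j<m. (\<lambda>n. freq (Suc (s n)) x j) \<longlonglongrightarrow> l j"
    by (rule prob_vec_convergent_subseq[of m "\<lambda>n. freq (Suc n) x", OF pv])
  have "(\<lambda>n. Aprod m r phi (freq (Suc (s n)) x)) \<longlonglongrightarrow> alpha"
    using LIMSEQ_subseq_LIMSEQ[OF LIMSEQ_Suc[OF assms(2)] s] by (simp add: comp_def)
  then have "Aprod m r phi l = alpha"
    by (rule LIMSEQ_unique[OF tendsto_Aprod[OF lim]])
  then show ?thesis
    using l by blast
qed

lemma entropy_maximizer_exists:
  assumes "\<exists>q. prob_vec m q \<and> Aprod m r phi q = alpha"
  shows "\<exists>p. prob_vec m p \<and> Aprod m r phi p = alpha \<and>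
            (\<forall>q. prob_vec m q \<and> Aprod m r phi q = alpha \<longrightarrow> H1 m q \<le> H1 m p)"
proof -
  define K where "K = {q. prob_vec m q \<and> Aprod m r phi q = alpha}"
  define h where "h = Sup (H1 m ` K)"
  have bdd: "bdd_above (H1 m ` K)"
    using H1_le_card by (auto simp: K_def bdd_above_def)
  have "K \<noteq> {}"
    using assms by (simp add: K_def)
  then have "\<exists>q\<in>K. h - inverse (real (Suc n)) < H1 m q" for n
    using less_cSup_iff[of "H1 m ` K" "h - inverse (real (Suc n))"] bdd by (simp add: h_def)
  then obtain Q where QK: "\<And>n. Q n \<in> K" and Q: "\<And>n. h - inverse (real (Suc n)) < H1 m (Q n)"
    by metis
  have "prob_vec m (Q n)" for n
    using QK by (simp add: K_def)
  then obtain s l where s: "strict_mono s" and l: "prob_vec m l"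
    and lim: "\<forall>j<m. (\<lambda>n. Q (s n) j) \<longlonglongrightarrow> l j"
    by (rule prob_vec_convergent_subseq)
  have "(\<lambda>n. Aprod m r phi (Q (s n))) \<longlonglongrightarrow> alpha"
    using QK by (simp add: K_def)
  then have "Aprod m r phi l = alpha"
    by (rule LIMSEQ_unique[OF tendsto_Aprod[OF lim]])
  moreover have "h \<le> H1 m l"
  proof (rule LIMSEQ_le)
    show "(\<lambda>n. h - inverse (real (Suc (s n)))) \<longlonglongrightarrow> h"
      using tendsto_diff[OF tendsto_const LIMSEQ_subseq_LIMSEQ[OF LIMSEQ_inverse_real_of_nat s], of h]
      by (simp add: comp_def)
    show "(\<lambda>n. H1 m (Q (s n))) \<longlonglongrightarrow> H1 m l"
      using QK by (intro tendsto_H1 lim) (auto simp: K_def prob_vec_def)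
  qed (use Q less_imp_le in blast)
  moreover have "H1 m q \<le> h" if "q \<in> K" for q
    unfolding h_def using bdd that by (intro cSup_upper) auto
  ultimately show ?thesis
    using l unfolding K_def by force
qed

lemma H1_bounded_near_level:
  assumes max: "\<forall>q. prob_vec m q \<and> Aprod m r phi q = alpha \<longrightarrow> H1 m q \<le> h" and "\<delta> > 0"
  shows "\<exists>\<eta>>0. \<forall>q. prob_vec m q \<and> \<bar>Aprod m r phi q - alpha\<bar> < \<eta> \<longrightarrow> H1 m q < h + \<delta>"
proof (rule ccontr)
  assume "\<not> ?thesis"
  then have "\<forall>\<eta>>0. \<exists>q. prob_vec m q \<and> \<bar>Aprod m r phi q - alpha\<bar> < \<eta> \<and> h + \<delta> \<le> H1 m q"
    by (meson not_le)
  then have "\<exists>q. prob_vec m q \<and> \<bar>Aprod m r phi q - alpha\<bar> < inverse (real (Suc n)) \<and> h + \<delta> \<le> H1 m q"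
    for n by simp
  then obtain Q where Qpv: "\<And>n. prob_vec m (Q n)"
    and Qnear: "\<And>n. \<bar>Aprod m r phi (Q n) - alpha\<bar> < inverse (real (Suc n))"
    and Qbig: "\<And>n. h + \<delta> \<le> H1 m (Q n)"
    by metis
  obtain s l where s: "strict_mono s" and l: "prob_vec m l"
    and lim: "\<forall>j<m. (\<lambda>n. Q (s n) j) \<longlonglongrightarrow> l j"
    by (rule prob_vec_convergent_subseq[OF Qpv])
  have "norm (Aprod m r phi (Q n) - alpha) \<le> inverse (real (Suc n))" for n
    using Qnear[of n] by simp
  then have "(\<lambda>n. Aprod m r phi (Q n) - alpha) \<longlonglongrightarrow> 0"
    by (intro Lim_null_comparison[OF always_eventually LIMSEQ_inverse_real_of_nat] allI)
  then have "(\<lambda>n. Aprod m r phi (Q n)) \<longlonglongrightarrow> alpha"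
    by (rule LIM_zero_cancel)
  then have "(\<lambda>n. Aprod m r phi (Q (s n))) \<longlonglongrightarrow> alpha"
    using LIMSEQ_subseq_LIMSEQ[OF _ s] by (simp add: comp_def)
  then have "Aprod m r phi l = alpha"
    by (rule LIMSEQ_unique[OF tendsto_Aprod[OF lim]])
  then have "H1 m l \<le> h"
    using max l by blast
  moreover have "(\<lambda>n. H1 m (Q (s n))) \<longlonglongrightarrow> H1 m l"
    using Qpv by (intro tendsto_H1 lim) (auto simp: prob_vec_def)
  then have "h + \<delta> \<le> H1 m l"
    using Qbig by (intro LIMSEQ_le_const) auto
  ultimately show False
    using \<open>\<delta> > 0\<close> by simp
qed

section \<open>Counting words of small empirical entropy\<close>

lemma prod_freq_eq_exp_H1:
  assumes "x ` {1..L} \<subseteq> {..<m}" "L \<ge> 1"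
  shows "(\<Prod>i\<in>{1..L}. freq L x (x i)) = exp (- real L * H1 m (freq L x))"
proof -
  have "freq L x j ^ digit_count L x j = exp (real L * (freq L x j * ln (freq L x j)))" for j
  proof (cases "digit_count L x j = 0")
    case False
    then have "freq L x j > 0" and "real L * freq L x j = real (digit_count L x j)"
      using assms(2) by (simp_all add: freq_def)
    then show ?thesis
      by (simp add: exp_of_nat_mult mult.assoc[symmetric])
  qed (simp add: freq_def)
  then have "(\<Prod>i\<in>{1..L}. freq L x (x i)) = (\<Prod>j<m. exp (real L * (freq L x j * ln (freq L x j))))"
    using prod_by_digit[OF _ assms(1), of "freq L x"] by (simp add: digit_count_def)
  then show ?thesis
    by (simp add: exp_sum[symmetric] H1_eq sum_distrib_left sum_negf)
qed

lemma sum_words_prod_prob_vec: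
  assumes "prob_vec m v" "I \<subseteq> {..<N}"
  shows "(\<Sum>w\<in>PiE {..<N} (\<lambda>_. {..<m}). \<Prod>i\<in>I. v (w i)) = real m ^ (N - card I)"
proof -
  have fin: "finite I"
    using assms(2) finite_subset by blast
  have "(\<Sum>w\<in>PiE {..<N} (\<lambda>_. {..<m}). \<Prod>i\<in>I. v (w i))
        = (\<Sum>w\<in>PiE {..<N} (\<lambda>_. {..<m}). \<Prod>i<N. if i \<in> I then v (w i) else 1)"
    using assms(2) by (intro sum.cong refl prod.mono_neutral_cong_left) auto
  also have "\<dots> = (\<Prod>i<N. \<Sum>a<m. if i \<in> I then v a else 1)"
    by (rule prod_sum_PiE[symmetric]) auto
  also have "\<dots> = (\<Prod>i\<in>{..<N} - I. real m)"
    using assms by (intro prod.mono_neutral_cong_right) (auto simp: prob_vec_def)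
  finally show ?thesis
    using assms(2) fin by (simp add: card_Diff_subset)
qed

lemma sum_subset_words_prod_le:
  assumes v: "prob_vec m v" and "I \<subseteq> {..<N}" "S \<subseteq> PiE {..<N} (\<lambda>_. {..<m})"
  shows "(\<Sum>w\<in>S. \<Prod>i\<in>I. v (w i)) \<le> real m ^ (N - card I)"
proof -
  have "0 \<le> (\<Prod>i\<in>I. v (w i))" if "w \<in> PiE {..<N} (\<lambda>_. {..<m})" for w
    using that assms(2) prob_vec_nonneg[OF v] by (intro prod_nonneg) (auto simp: subset_iff)
  then have "(\<Sum>w\<in>S. \<Prod>i\<in>I. v (w i)) \<le> (\<Sum>w\<in>PiE {..<N} (\<lambda>_. {..<m}). \<Prod>i\<in>I. v (w i))"
    using assms(3) by (intro sum_mono2 finite_PiE) auto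
  then show ?thesis
    using sum_words_prod_prob_vec[OF v assms(2)] by simp
qed

lemma finite_words:
  fixes N m :: nat
  shows "finite {w \<in> PiE {..<N} (\<lambda>_. {..<m}). P w}"
  by (rule finite_subset[OF _ finite_PiE[of "{..<N}" "\<lambda>_. {..<m}"]]) auto

lemma card_freq_image_le:
  assumes "\<And>w. w \<in> W \<Longrightarrow> w ` {1..L} \<subseteq> {..<m}"
  shows "card (freq L ` W) \<le> (L + 1) ^ m"
proof -
  define vec where "vec c = (\<lambda>j. if j < m then real (c j) / real L else 0)" for c :: "nat \<Rightarrow> nat"
  have "freq L w = vec (restrict (digit_count L w) {..<m})" if "w \<in> W" for w
  proof -
    have "digit_count L w j = 0" if "j \<ge> m" for j
      using assms[OF \<open>w \<in> W\<close>] that by (force simp: digit_count_def)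
    then show ?thesis
      by (auto simp: fun_eq_iff vec_def freq_def)
  qed
  moreover have "digit_count L w j \<le> L" for w j
    using card_mono[of "{1..L}" "{i \<in> {1..L}. w i = j}"] by (fastforce simp: digit_count_def)
  ultimately have "freq L ` W \<subseteq> vec ` PiE {..<m} (\<lambda>_. {..L})"
    by (force simp: PiE_def Pi_def)
  then have "card (freq L ` W) \<le> card (vec ` PiE {..<m} (\<lambda>_. {..L}))"
    by (intro card_mono finite_imageI finite_PiE) auto
  also have "\<dots> \<le> card (PiE {..<m} (\<lambda>_. {..L}))"
    by (intro card_image_le finite_PiE) auto
  finally show ?thesis
    by (simp add: card_PiE)
qed

text \<open>A word of type \<open>v\<close> has \<open>v\<close>-probability \<open>e\<^sup>-\<^sup>L\<^sup>H\<^sup>(\<^sup>v\<^sup>)\<close> and the words of one type carry total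
  \<open>v\<close>-probability at most \<open>m\<^sup>c\<^sup>+\<^sup>1\<close> (the last \<open>c + 1\<close> letters are free); there are at most
  \<open>(L+1)\<^sup>m\<close> types.\<close>

lemma card_low_entropy_words:
  assumes "L \<ge> 1"
  shows "real (card {w \<in> PiE {..<L+c+1} (\<lambda>_. {..<m}). H1 m (freq L w) \<le> t})
         \<le> real m ^ (c+1) * real (L+1) ^ m * exp (real L * t)"
proof -
  define Words where "Words = PiE {..<L+c+1} (\<lambda>_. {..<m})"
  define W where "W = {w \<in> Words. H1 m (freq L w) \<le> t}"
  have finW: "finite W"
    unfolding W_def Words_def by (rule finite_words)
  have digits: "w ` {1..L} \<subseteq> {..<m}" if "w \<in> Words" for w
  proof (rule image_subsetI)
    fix i assume "i \<in> {1..L}"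
    then have "i \<in> {..<L+c+1}"
      by simp
    then show "w i \<in> {..<m}"
      using that by (auto simp: Words_def simp del: lessThan_iff)
  qed
  have type_mass: "(\<Sum>w\<in>{w \<in> W. freq L w = v}. \<Prod>i\<in>{1..L}. v (w i)) \<le> real m ^ (c+1)"
    if "v \<in> freq L ` W" for v
  proof -
    from that obtain w0 where "w0 \<in> W" "v = freq L w0"
      by blast
    then have v: "prob_vec m v"
      using prob_vec_freq[OF digits assms] by (auto simp: W_def)
    have "{1..L} \<subseteq> {..<L+c+1}" "{w \<in> W. freq L w = v} \<subseteq> Words"
      by (auto simp: W_def)
    then have "(\<Sum>w\<in>{w \<in> W. freq L w = v}. \<Prod>i\<in>{1..L}. v (w i)) \<le> real m ^ (L + c + 1 - card {1..L})"
      unfolding Words_def by (rule sum_subset_words_prod_le[OF v])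
    then show ?thesis
      by simp
  qed
  have "exp (- real L * t) \<le> (\<Prod>i\<in>{1..L}. freq L w (w i))" if "w \<in> W" for w
  proof -
    have "w \<in> Words" "real L * H1 m (freq L w) \<le> real L * t"
      using that by (auto simp: W_def mult_left_mono)
    then show ?thesis
      using prod_freq_eq_exp_H1[OF digits assms, of w] by simp
  qed
  then have "real (card W) * exp (- real L * t) \<le> (\<Sum>w\<in>W. \<Prod>i\<in>{1..L}. freq L w (w i))"
    using sum_mono[of W "\<lambda>_. exp (- real L * t)"] by simp
  also have "\<dots> = (\<Sum>v\<in>freq L ` W. \<Sum>w\<in>{w \<in> W. freq L w = v}. \<Prod>i\<in>{1..L}. freq L w (w i))"
    by (rule sum.group[symmetric, OF finW finite_imageI[OF finW]]) blast
  also have "\<dots> = (\<Sum>v\<in>freq L ` W. \<Sum>w\<in>{w \<in> W. freq L w = v}. \<Prod>i\<in>{1..L}. v (w i))"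
    by (rule sum.cong[OF refl], rule sum.cong[OF refl]) auto
  also have "\<dots> \<le> real (card (freq L ` W)) * real m ^ (c+1)"
    using sum_mono[OF type_mass] by simp
  also have "\<dots> \<le> real (L+1) ^ m * real m ^ (c+1)"
    using card_freq_image_le[of W L m] digits
    by (intro mult_right_mono) (auto simp: W_def simp flip: of_nat_Suc of_nat_power)
  finally have le: "real (card W) * exp (- real L * t) \<le> real (L+1) ^ m * real m ^ (c+1)" .
  have "real (card W) = real (card W) * exp (- real L * t) * exp (real L * t)"
    by (simp add: mult.assoc flip: exp_add)
  also have "\<dots> \<le> real (L+1) ^ m * real m ^ (c+1) * exp (real L * t)"
    using le by (rule mult_right_mono) simp
  finally show ?thesis
    by (simp add: W_def Words_def mult_ac)
qed

section \<open>Bowen balls and cylinders\<close>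

definition cylinder :: "nat \<Rightarrow> (nat \<Rightarrow> nat) \<Rightarrow> nat \<Rightarrow> (nat \<Rightarrow> nat) set" where
  "cylinder m y k = {z \<in> Sigma m. \<forall>i<k. z i = y i}"

lemma bowen_dist_less:
  assumes "eps > 0" "\<And>j. j < L \<Longrightarrow> sdist ((shift ^^ j) y) ((shift ^^ j) z) < eps"
  shows "bowen_dist L y z < eps"
  unfolding bowen_dist_def using assms by (subst Max_less_iff) auto

lemma sdist_le_bowen_dist:
  assumes "j < L"
  shows "sdist ((shift ^^ j) y) ((shift ^^ j) z) \<le> bowen_dist L y z"
  unfolding bowen_dist_def using assms by (intro Max_ge) auto

lemma bowen_ball_if_agree:
  assumes "z \<in> Sigma m" "(1/2::real) ^ c < eps" "\<And>i. i < L + c + 1 \<Longrightarrow> y i = z i"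
  shows "z \<in> bowen_ball m L y eps"
proof -
  have eps: "0 < eps"
    using assms(2) zero_le_power[of "1/2::real" c] by linarith
  have "sdist ((shift ^^ j) y) ((shift ^^ j) z) < eps" if j: "j < L" for j
  proof (cases "(shift ^^ j) y = (shift ^^ j) z")
    case True
    then show ?thesis
      using eps by (simp add: sdist_def)
  next
    case False
    define k where "k = (LEAST i. (shift ^^ j) y i \<noteq> (shift ^^ j) z i)"
    have "\<exists>i. (shift ^^ j) y i \<noteq> (shift ^^ j) z i"
      using False by auto
    then have k: "(shift ^^ j) y k \<noteq> (shift ^^ j) z k"
      unfolding k_def by (rule LeastI_ex)
    have "c \<le> k"
    proof (rule ccontr)
      assume "\<not> c \<le> k"
      then have "k + j < L + c + 1"
        using j by simp
      then show False
        using k assms(3) by (simp add: funpow_shift)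
    qed
    then have "(1/2::real) ^ k \<le> (1/2) ^ c"
      by (rule power_decreasing) auto
    then have "(1/2::real) ^ k < eps"
      using assms(2) by linarith
    then show ?thesis
      using False by (simp add: sdist_def k_def)
  qed
  then show ?thesis
    using assms(1) eps by (auto simp: bowen_ball_def intro!: bowen_dist_less)
qed

lemma bowen_ball_subset_cylinder:
  assumes "eps \<le> 1"
  shows "bowen_ball m L y eps \<subseteq> cylinder m y L"
proof
  fix z assume z: "z \<in> bowen_ball m L y eps"
  have "z i = y i" if "i < L" for i
  proof (rule ccontr)
    assume ne: "z i \<noteq> y i"
    have "sdist ((shift ^^ i) y) ((shift ^^ i) z) \<le> bowen_dist L y z"
      by (rule sdist_le_bowen_dist[OF that])
    also have "\<dots> < 1"
      using z assms by (simp add: bowen_ball_def)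
    finally have "sdist ((shift ^^ i) y) ((shift ^^ i) z) < 1" .
    moreover have "(LEAST k. (shift ^^ i) y k \<noteq> (shift ^^ i) z k) = 0"
      using ne by (intro Least_equality) (auto simp: funpow_shift)
    moreover have "(shift ^^ i) y \<noteq> (shift ^^ i) z"
      using ne by (auto simp: funpow_shift dest: fun_cong[of _ _ 0])
    ultimately show False
      by (simp add: sdist_def)
  qed
  then show "z \<in> cylinder m y L"
    using z by (simp add: cylinder_def bowen_ball_def)
qed

definition truncate :: "nat \<Rightarrow> (nat \<Rightarrow> nat) \<Rightarrow> (nat \<Rightarrow> nat)" where
  "truncate N x = (\<lambda>i. if i < N then x i else 0)"

text \<open>A point agreeing with \<open>y\<close> on the first \<open>L + c + 1\<close> letters lies in the \<open>d\<^sub>L\<close>-ball of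
  radius \<open>eps > 2\<^sup>-\<^sup>c\<close> around \<open>y\<close>, so the truncations of the points of empirical entropy at most
  \<open>t\<close> are centres of a cover, counted by the words of length \<open>L + c + 1\<close>.\<close>

lemma low_entropy_cover:
  fixes L c m :: nat and t eps :: real
  defines "A \<equiv> truncate (L+c+1) ` {x \<in> Sigma m. H1 m (freq L x) \<le> t}"
  assumes "L \<ge> 1" "(1/2::real) ^ c < eps"
  shows "finite A" "A \<subseteq> Sigma m"
    "real (card A) \<le> real m ^ (c+1) * real (L+1) ^ m * exp (real L * t)"
    "{x \<in> Sigma m. H1 m (freq L x) \<le> t} \<subseteq> (\<Union>y\<in>A. bowen_ball m L y eps)"
proof -
  define N where "N = L + c + 1"
  define S where "S = {x \<in> Sigma m. H1 m (freq L x) \<le> t}"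
  define W where "W = {w \<in> PiE {..<N} (\<lambda>_. {..<m}). H1 m (freq L w) \<le> t}"
  have A: "A = truncate N ` S"
    by (simp add: A_def N_def S_def)
  have finW: "finite W"
    unfolding W_def by (rule finite_words)
  have "truncate N ` S \<subseteq> truncate N ` W"
  proof (rule image_subsetI)
    fix x assume "x \<in> S"
    then have "restrict x {..<N} \<in> W"
      using freq_cong[of L "restrict x {..<N}" x] by (auto simp: S_def W_def Sigma_def N_def)
    moreover have "truncate N (restrict x {..<N}) = truncate N x"
      by (simp add: truncate_def fun_eq_iff)
    ultimately show "truncate N x \<in> truncate N ` W"
      by (metis imageI)
  qed
  then show "finite A"
    using finW A by (meson finite_imageI finite_subset)
  have "card A \<le> card W"
    unfolding A using card_mono[OF finite_imageI[OF finW] \<open>truncate N ` S \<subseteq> truncate N ` W\<close>]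
      card_image_le[OF finW, of "truncate N"] by linarith
  then show "real (card A) \<le> real m ^ (c+1) * real (L+1) ^ m * exp (real L * t)"
    using card_low_entropy_words[OF assms(2), of c m t] by (simp add: W_def N_def)
  show "A \<subseteq> Sigma m"
    unfolding A by (auto simp: S_def Sigma_def truncate_def) (metis gr0I not_less0)
  show "{x \<in> Sigma m. H1 m (freq L x) \<le> t} \<subseteq> (\<Union>y\<in>A. bowen_ball m L y eps)"
  proof
    fix x assume "x \<in> {x \<in> Sigma m. H1 m (freq L x) \<le> t}"
    then have "x \<in> S"
      by (simp add: S_def)
    moreover have "x \<in> bowen_ball m L (truncate N x) eps"
      using \<open>x \<in> S\<close> by (intro bowen_ball_if_agree[OF _ assms(3)]) (auto simp: S_def truncate_def N_def)
    ultimately show "x \<in> (\<Union>y\<in>A. bowen_ball m L y eps)"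
      unfolding A by blast
  qed
qed

section \<open>The upper bound\<close>

lemma bowen_Hn_mono: "n \<le> n' \<Longrightarrow> bowen_Hn m Z s eps n \<le> bowen_Hn m Z s eps n'"
  unfolding bowen_Hn_def by (rule INF_superset_mono) auto

lemma bowen_H_eq_SUP: "bowen_H m Z s eps = (SUP n. bowen_Hn m Z s eps n)"
proof -
  have "incseq (\<lambda>n. bowen_Hn m Z s eps n)"
    by (auto simp: incseq_def intro: bowen_Hn_mono)
  then show ?thesis
    unfolding bowen_H_def by (intro limI LIMSEQ_SUP)
qed

lemma ennreal_sum_le_infsum:
  fixes f :: "'a \<Rightarrow> ennreal"
  assumes "finite F" "F \<subseteq> A"
  shows "sum f F \<le> infsum f A"
  unfolding nonneg_infsum_complete[of A f, OF zero_le] using assms by (intro SUP_upper) auto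

lemma summable_on_ennreal_valued: "(f :: 'a \<Rightarrow> ennreal) summable_on A"
  by (rule nonneg_summable_on_complete) simp

lemma sum_UN_le_sum_sum:
  fixes f :: "'a \<Rightarrow> real"
  assumes "finite I" "\<And>i. i \<in> I \<Longrightarrow> finite (A i)" "\<And>x. 0 \<le> f x"
  shows "sum f (\<Union>i\<in>I. A i) \<le> (\<Sum>i\<in>I. sum f (A i))"
proof -
  have "(\<Union>i\<in>I. A i) = snd ` (SIGMA i:I. A i)"
    by force
  then have "sum f (\<Union>i\<in>I. A i) \<le> sum (f \<circ> snd) (SIGMA i:I. A i)"
    using sum_image_le[of "SIGMA i:I. A i" f snd] assms by simp
  also have "\<dots> = (\<Sum>i\<in>I. sum f (A i))"
    using assms by (subst sum.Sigma) (auto simp: split_def)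
  finally show ?thesis .
qed

lemma bowen_Hn_le_of_covers:
  assumes fin: "\<And>N. finite (A N)" and sub: "\<And>N. A N \<subseteq> Sigma m \<times> {n..}"
    and cover: "Z \<subseteq> (\<Union>N. \<Union>(x,k)\<in>A N. bowen_ball m k x eps)"
    and small: "\<And>N. (\<Sum>(x,k)\<in>A N. exp (- s * real k)) \<le> e / 2 ^ Suc N"
  shows "bowen_Hn m Z s eps n \<le> ennreal e"
proof -
  define C where "C = (\<Union>N. A N)"
  define f where "f = (\<lambda>(x::nat \<Rightarrow> nat, k::nat). exp (- s * real k))"
  have "sum f F \<le> e" if F: "finite F" "F \<subseteq> C" for F
  proof -
    obtain Nf where Nf: "\<And>z. z \<in> F \<Longrightarrow> z \<in> A (Nf z)"
      using F(2) unfolding C_def by (metis UN_E subsetD)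
    define K where "K = Max (Nf ` F)"
    have "F \<subseteq> (\<Union>N\<le>K. A N)"
      using Nf F(1) by (force simp: K_def)
    then have "sum f F \<le> sum f (\<Union>N\<le>K. A N)"
      using fin by (intro sum_mono2) (auto simp: f_def)
    also have "\<dots> \<le> (\<Sum>N\<le>K. sum f (A N))"
      using fin by (intro sum_UN_le_sum_sum) (auto simp: f_def)
    also have "\<dots> \<le> (\<Sum>N\<le>K. e * (1/2) ^ Suc N)"
      using small by (intro sum_mono) (simp add: f_def split_def power_one_over)
    also have "\<dots> = e * (1 - (1/2) ^ Suc K)"
      by (induction K) (auto simp: algebra_simps)
    also have "\<dots> \<le> e"
    proof -
      have "0 \<le> sum f (A 0)"
        by (intro sum_nonneg) (auto simp: f_def)
      then have "0 \<le> e"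
        using small[of 0] by (simp add: f_def split_def)
      then show ?thesis
        by (simp add: right_diff_distrib)
    qed
    finally show ?thesis .
  qed
  then have "(\<Sum>\<^sub>\<infinity>z\<in>C. ennreal (f z)) \<le> ennreal e"
    by (intro infsum_le_finite_sums summable_on_ennreal_valued)
       (auto simp: sum_ennreal f_def split_def intro!: ennreal_leI)
  moreover have "C \<in> {C. countable C \<and> C \<subseteq> Sigma m \<times> {n..} \<and>
                   Z \<subseteq> (\<Union>(x,k)\<in>C. bowen_ball m k x eps)}"
    using fin sub cover by (auto simp: C_def intro: countable_finite)
  ultimately show ?thesis
    unfolding bowen_Hn_def by (intro INF_lower2) (auto simp: f_def split_def)
qed

lemma geometrically_small_subseq:
  fixes g :: "nat \<Rightarrow> real"
  assumes "g \<longlonglongrightarrow> 0" "e > 0"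
  obtains L where "\<forall>N. max n N + 1 \<le> L N" "\<forall>N. g (L N) < e / 2 ^ Suc N"
proof -
  have "\<forall>N. \<exists>L. max n N + 1 \<le> L \<and> g L < e / 2 ^ Suc N"
  proof
    fix N
    have "eventually (\<lambda>L. max n N + 1 \<le> L \<and> g L < e / 2 ^ Suc N) sequentially"
      by (intro eventually_conj eventually_ge_at_top order_tendstoD(2)[OF assms(1)])
         (use assms(2) in simp)
    then show "\<exists>L. max n N + 1 \<le> L \<and> g L < e / 2 ^ Suc N"
      unfolding eventually_sequentially by blast
  qed
  from choice[OF this] obtain L where "\<forall>N. max n N + 1 \<le> L N \<and> g (L N) < e / 2 ^ Suc N"
    by blast
  then show thesis
    using that by blast
qed

text \<open>Covering the points of entropy at most \<open>t\<close> at time \<open>L\<close> costs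
  \<open>m\<^sup>c\<^sup>+\<^sup>1 (L+1)\<^sup>m e\<^sup>-\<^sup>(\<^sup>s\<^sup>-\<^sup>t\<^sup>)\<^sup>L\<close>; along a sparse sequence of times these costs are summable, and every
  point of \<open>Z\<close> is eventually covered.\<close>

lemma bowen_Hn_le_if_low_entropy:
  assumes c: "(1/2::real) ^ c < eps" and Z: "Z \<subseteq> Sigma m"
    and low: "\<And>x. x \<in> Z \<Longrightarrow> eventually (\<lambda>n. H1 m (freq n x) \<le> t) sequentially"
    and L: "\<And>N. max n N + 1 \<le> L N"
      "\<And>N. real m ^ (c+1) * real (L N + 1) ^ m * exp (- (s - t) * real (L N)) < e / 2 ^ Suc N"
  shows "bowen_Hn m Z s eps n \<le> ennreal e"
proof (rule bowen_Hn_le_of_covers)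
  define B where "B N = truncate (L N + c + 1) ` {x \<in> Sigma m. H1 m (freq (L N) x) \<le> t}" for N
  have L1: "1 \<le> L N" for N
    using L(1)[of N] by simp
  have B: "finite (B N)" "B N \<subseteq> Sigma m"
    "real (card (B N)) \<le> real m ^ (c+1) * real (L N + 1) ^ m * exp (real (L N) * t)"
    "{x \<in> Sigma m. H1 m (freq (L N) x) \<le> t} \<subseteq> (\<Union>y\<in>B N. bowen_ball m (L N) y eps)" for N
    unfolding B_def by (rule low_entropy_cover[OF L1 c])+
  show "finite ((\<lambda>y. (y, L N)) ` B N)" "(\<lambda>y. (y, L N)) ` B N \<subseteq> Sigma m \<times> {n..}" for N
    using B L(1)[of N] by auto
  show "Z \<subseteq> (\<Union>N. \<Union>(x,k)\<in>(\<lambda>y. (y, L N)) ` B N. bowen_ball m k x eps)"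
  proof
    fix x assume "x \<in> Z"
    then obtain N where "\<forall>n\<ge>N. H1 m (freq n x) \<le> t"
      using low by (auto simp: eventually_sequentially)
    then have "x \<in> {x \<in> Sigma m. H1 m (freq (L N) x) \<le> t}"
      using L(1)[of N] Z \<open>x \<in> Z\<close> by auto
    then show "x \<in> (\<Union>N. \<Union>(x,k)\<in>(\<lambda>y. (y, L N)) ` B N. bowen_ball m k x eps)"
      using B(4)[of N] by blast
  qed
  show "(\<Sum>(x,k)\<in>(\<lambda>y. (y, L N)) ` B N. exp (- s * real k)) \<le> e / 2 ^ Suc N" for N
  proof -
    have "(\<Sum>(x,k)\<in>(\<lambda>y. (y, L N)) ` B N. exp (- s * real k)) = real (card (B N)) * exp (- s * real (L N))"
      by (simp add: sum.reindex inj_on_def)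
    also have "\<dots> \<le> real m ^ (c+1) * real (L N + 1) ^ m * exp (real (L N) * t) * exp (- s * real (L N))"
      using B(3) by (rule mult_right_mono) simp
    also have "\<dots> = real m ^ (c+1) * real (L N + 1) ^ m * exp (- (s - t) * real (L N))"
      by (simp add: mult.assoc flip: exp_add) (simp add: algebra_simps)
    finally show ?thesis
      using L(2)[of N] by simp
  qed
qed

lemma bowen_H_eq_0_if_low_entropy:
  assumes eps: "eps > 0" and Z: "Z \<subseteq> Sigma m" and "t < s"
    and low: "\<And>x. x \<in> Z \<Longrightarrow> eventually (\<lambda>n. H1 m (freq n x) \<le> t) sequentially"
  shows "bowen_H m Z s eps = 0"
proof -
  obtain c where c: "(1/2::real) ^ c < eps"
    using real_arch_pow_inv[OF eps, of "1/2"] by auto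
  have lim: "(\<lambda>L. real m ^ (c+1) * real (L + 1) ^ m * exp (- (s - t) * real L)) \<longlonglongrightarrow> 0"
    using \<open>t < s\<close> by real_asymp
  have "bowen_Hn m Z s eps n = 0" for n
  proof (rule antisym[OF ennreal_le_epsilon zero_le])
    fix e :: real assume "0 < e"
    obtain L where "\<forall>N. max n N + 1 \<le> L N"
      "\<forall>N. real m ^ (c+1) * real (L N + 1) ^ m * exp (- (s - t) * real (L N)) < e / 2 ^ Suc N"
      by (rule geometrically_small_subseq[OF lim \<open>0 < e\<close>, where n = n])
    then have "bowen_Hn m Z s eps n \<le> ennreal e"
      by (intro bowen_Hn_le_if_low_entropy[OF c Z low, where L = L]) auto
    then show "bowen_Hn m Z s eps n \<le> 0 + ennreal e"
      by simp
  qed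
  then show ?thesis
    by (simp add: bowen_H_eq_SUP)
qed

lemma htop_eps_le_if_low_entropy:
  assumes "eps > 0" "Z \<subseteq> Sigma m"
    and "\<And>t x. h < t \<Longrightarrow> x \<in> Z \<Longrightarrow> eventually (\<lambda>n. H1 m (freq n x) \<le> t) sequentially"
  shows "htop_eps m Z eps \<le> ereal h"
proof (rule ereal_le_epsilon2)
  fix e :: real assume "e > 0"
  have "bowen_H m Z (h + e) eps = 0"
    by (rule bowen_H_eq_0_if_low_entropy[OF assms(1,2), where t="h + e/2"])
       (use assms(3) \<open>e > 0\<close> in auto)
  then have "htop_eps m Z eps \<le> ereal (h + e)"
    unfolding htop_eps_def by (intro Inf_lower) blast
  then show "htop_eps m Z eps \<le> ereal h + ereal e"
    by simp
qed

section \<open>Typical points of a Bernoulli measure\<close>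

lemma digit_count_eq_sum: "real (digit_count n x j) = (\<Sum>i\<in>{1..n}. if x i = j then 1 else 0)"
  unfolding digit_count_def real_of_card by (rule sum.inter_filter) simp

lemma borel_measurable_digit_count:
  "(\<lambda>x. real (digit_count n x j)) \<in> borel_measurable (bernoulli m p)"
  unfolding digit_count_eq_sum
  by (intro borel_measurable_sum measurable_compose[OF measurable_coordinate_bernoulli
        borel_measurable_marginal[of "\<lambda>a. if a = j then 1 else 0"]])

lemma indep_vars_coordinates_bernoulli:
  assumes "prob_vec m p"
  shows "prob_space.indep_vars (bernoulli m p) (\<lambda>_. marginal m p) (\<lambda>i x. x i) UNIV"
proof -
  interpret prob_space "bernoulli m p"
    using prob_space_bernoulli[OF assms] .
  have "distr (bernoulli m p) (PiM UNIV (\<lambda>_. marginal m p)) (\<lambda>x. \<lambda>i\<in>UNIV. x i) = bernoulli m p"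
    by (simp add: bernoulli_eq_PiM_marginal distr_id restrict_UNIV[abs_def])
  then show ?thesis
  proof (subst indep_vars_iff_distr_eq_PiM)
    show "distr (bernoulli m p) (PiM UNIV (\<lambda>_. marginal m p)) (\<lambda>x. \<lambda>i\<in>UNIV. x i)
          = PiM UNIV (\<lambda>i. distr (bernoulli m p) (marginal m p) (\<lambda>x. x i))"
      if "distr (bernoulli m p) (PiM UNIV (\<lambda>_. marginal m p)) (\<lambda>x. \<lambda>i\<in>UNIV. x i) = bernoulli m p"
      unfolding distr_coordinate_bernoulli[OF assms] using that by (simp add: bernoulli_eq_PiM_marginal)
  qed (auto intro: measurable_coordinate_bernoulli)
qed

lemma hoeffding_digit_count:
  assumes p: "prob_vec m p" and "n \<ge> 1" "t \<ge> 0" "j < m"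
  shows "measure (bernoulli m p) {x \<in> space (bernoulli m p). \<bar>real (digit_count n x j) - real n * p j\<bar> \<ge> t}
         \<le> 2 * exp (-2 * t\<^sup>2 / real n)"
proof -
  interpret M: prob_space "bernoulli m p"
    using prob_space_bernoulli[OF p] .
  define X where "X i x = (if x i = j then 1 else 0::real)" for i and x :: "nat \<Rightarrow> nat"
  have "M.indep_vars (\<lambda>_. borel) (\<lambda>i x. (\<lambda>a. if a = j then 1 else 0::real) (x i)) UNIV"
    by (rule M.indep_vars_compose2[OF indep_vars_coordinates_bernoulli[OF p]])
       (rule borel_measurable_marginal)
  then have indep: "M.indep_vars (\<lambda>_. borel) X {1..n}"
    unfolding X_def by (rule M.indep_vars_subset) simp
  have "(\<Sum>a<m. (if a = j then 1 else 0) * p a) = (\<Sum>a<m. if a = j then p j else 0)"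
    by (intro sum.cong) auto
  then have EX: "M.expectation (X i) = p j" for i
    using integral_bernoulli_coordinate[OF p, of "\<lambda>a. if a = j then 1 else 0" i] \<open>j < m\<close>
    by (simp add: X_def[abs_def])
  interpret Hoeffding_ineq "bernoulli m p" "{1..n}" X "\<lambda>_. 0" "\<lambda>_. 1" "real n * p j"
    by unfold_locales (use indep in \<open>simp_all add: EX X_def\<close>)
  have "M.prob {x \<in> space (bernoulli m p). \<bar>(\<Sum>i\<in>{1..n}. X i x) - real n * p j\<bar> \<ge> t}
        \<le> 2 * exp (-2 * t\<^sup>2 / (\<Sum>i\<in>{1..n}. (1 - 0)\<^sup>2))"
    by (rule Hoeffding_ineq_abs_ge) (use assms in simp_all)
  then show ?thesis
    by (simp add: digit_count_eq_sum X_def)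
qed

text \<open>With the radius \<open>\<rho>\<^sub>n = (ln (n+1) / n)\<^sup>1\<^sup>/\<^sup>2\<close>, Hoeffding's bound becomes \<open>2/(n+1)\<^sup>2\<close>, which is
  summable, while \<open>\<rho>\<^sub>n \<rightarrow> 0\<close>.\<close>

definition freq_radius :: "nat \<Rightarrow> real" where
  "freq_radius n = sqrt (ln (real (Suc n)) / real n)"

lemma freq_radius_tendsto_0: "freq_radius \<longlonglongrightarrow> 0"
  unfolding freq_radius_def by real_asymp

lemma prob_freq_deviation_le:
  assumes p: "prob_vec m p" and n: "n \<ge> 1"
  shows "measure (bernoulli m p)
           {x \<in> space (bernoulli m p). \<exists>j<m. \<bar>real (digit_count n x j) - real n * p j\<bar> \<ge> real n * freq_radius n}
         \<le> 2 * real m / real (Suc n) ^ 2"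
proof -
  interpret M: prob_space "bernoulli m p"
    using prob_space_bernoulli[OF p] .
  define B where "B j = {x \<in> space (bernoulli m p).
                          \<bar>real (digit_count n x j) - real n * p j\<bar> \<ge> real n * freq_radius n}" for j
  have "B j \<in> M.events" for j
    unfolding B_def using borel_measurable_digit_count[of n j m p] by measurable
  have "(real n * freq_radius n)\<^sup>2 = real n ^ 2 * (ln (real (Suc n)) / real n)"
    unfolding freq_radius_def power_mult_distrib by simp
  then have "exp (-2 * (real n * freq_radius n)\<^sup>2 / real n) = exp (- (2 * ln (real (Suc n))))"
    using n by (simp add: power2_eq_square)
  also have "\<dots> = 1 / real (Suc n) ^ 2"
    using exp_of_nat_mult[of 2 "ln (real (Suc n))"] by (simp add: exp_minus inverse_eq_divide)
  finally have bound: "exp (-2 * (real n * freq_radius n)\<^sup>2 / real n) = 1 / real (Suc n) ^ 2" .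
  have eq: "{x \<in> space (bernoulli m p).
          \<exists>j<m. \<bar>real (digit_count n x j) - real n * p j\<bar> \<ge> real n * freq_radius n}
        = (\<Union>j\<in>{..<m}. B j)"
    by (auto simp: B_def)
  have "M.prob (\<Union>j\<in>{..<m}. B j) \<le> (\<Sum>j<m. M.prob (B j))"
    by (rule measure_UNION_le) (auto simp: \<open>\<And>j. B j \<in> M.events\<close>)
  also have "\<dots> \<le> (\<Sum>j<m. 2 * (1 / real (Suc n) ^ 2))"
  proof (rule sum_mono)
    fix j assume "j \<in> {..<m}"
    then have "M.prob (B j) \<le> 2 * exp (-2 * (real n * freq_radius n)\<^sup>2 / real n)"
      unfolding B_def by (intro hoeffding_digit_count[OF p n]) (auto simp: freq_radius_def)
    then show "M.prob (B j) \<le> 2 * (1 / real (Suc n) ^ 2)"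
      by (simp only: bound)
  qed
  finally show ?thesis
    by (simp add: eq mult.commute)
qed

lemma (in prob_space) prob_UN_tail_less:
  assumes "\<And>n. B n \<in> events" "\<And>n. prob (B n) \<le> b n" "summable b" "d > 0"
  obtains N where "prob (\<Union>k. B (k + N)) < d"
proof -
  obtain N where N: "norm (\<Sum>k. b (k + N)) < d"
    using suminf_exist_split[OF assms(4,3)] by blast
  have "prob (\<Union>k. B (k + N)) \<le> (\<Sum>k. prob (B (k + N)))"
    using assms(1,2) summable_ignore_initial_segment[OF assms(3)]
    by (intro finite_measure_subadditive_countably)
       (auto intro: summable_comparison_test'[where g="\<lambda>k. b (k + N)"])
  also have "\<dots> \<le> (\<Sum>k. b (k + N))"
    using assms(1,2) summable_ignore_initial_segment[OF assms(3)]
    by (intro suminf_le) (auto intro: summable_comparison_test'[where g="\<lambda>k. b (k + N)"])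
  finally show thesis
    using N by (intro that[of N]) simp
qed

lemma abs_freq_minus_less:
  assumes "n \<ge> 1" "\<bar>real (digit_count n x j) - real n * q\<bar> < real n * d"
  shows "\<bar>freq n x j - q\<bar> < d"
proof -
  have "freq n x j - q = (real (digit_count n x j) - real n * q) / real n"
    using assms(1) by (simp add: freq_def diff_divide_distrib)
  then show ?thesis
    using assms by (simp add: divide_less_eq mult.commute)
qed

lemma typical_set_exists:
  assumes p: "prob_vec m p"
  obtains G N where "emeasure (bernoulli m p) G \<ge> ennreal (1/2)" "N \<ge> 1" "G \<subseteq> Sigma m"
    "\<forall>x\<in>G. \<forall>n\<ge>N. \<forall>j<m. \<bar>freq n x j - p j\<bar> < freq_radius n"
proof -
  interpret M: prob_space "bernoulli m p"
    using prob_space_bernoulli[OF p] .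
  define Bad where "Bad n = {x \<in> space (bernoulli m p).
      \<exists>j<m. \<bar>real (digit_count (Suc n) x j) - real (Suc n) * p j\<bar> \<ge> real (Suc n) * freq_radius (Suc n)}" for n
  have Bad_events: "Bad n \<in> M.events" for n
    unfolding Bad_def using borel_measurable_digit_count by measurable
  have bound: "M.prob (Bad n) \<le> 2 * real m * inverse (real (Suc (Suc n)) ^ 2)" for n
    using prob_freq_deviation_le[OF p, of "Suc n"] by (simp add: Bad_def divide_inverse)
  have "summable (\<lambda>n. inverse (real n ^ 2))"
    by (rule inverse_power_summable) simp
  from summable_ignore_initial_segment[OF this, of 2]
  have summable: "summable (\<lambda>n. 2 * real m * inverse (real (Suc (Suc n)) ^ 2))"
    by (intro summable_mult) simp
  obtain N0 where N0: "M.prob (\<Union>k. Bad (k + N0)) < 1/2"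
    by (rule M.prob_UN_tail_less[OF Bad_events bound summable, of "1/2"]) simp_all
  define G where "G = space (bernoulli m p) - (\<Union>k. Bad (k + N0))"
  show thesis
  proof (rule that[of G "Suc N0"])
    have "M.prob G = 1 - M.prob (\<Union>k. Bad (k + N0))"
      unfolding G_def using Bad_events by (intro M.prob_compl) auto
    then have "1/2 \<le> M.prob G"
      using N0 by simp
    then show "emeasure (bernoulli m p) G \<ge> ennreal (1/2)"
      unfolding M.emeasure_eq_measure by (rule ennreal_leI)
    show "G \<subseteq> Sigma m"
      by (auto simp: G_def space_bernoulli)
    show "\<forall>x\<in>G. \<forall>n\<ge>Suc N0. \<forall>j<m. \<bar>freq n x j - p j\<bar> < freq_radius n"
    proof (intro ballI allI impI)
      fix x n j assume x: "x \<in> G" and n: "Suc N0 \<le> n" and j: "j < m"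
      define k where "k = n - Suc N0"
      have n_eq: "n = Suc (k + N0)"
        using n by (simp add: k_def)
      have "x \<notin> Bad (k + N0)" "x \<in> space (bernoulli m p)"
        using x by (auto simp: G_def)
      then have "\<not> real n * freq_radius n \<le> \<bar>real (digit_count n x j) - real n * p j\<bar>"
        using j unfolding Bad_def n_eq by blast
      then show "\<bar>freq n x j - p j\<bar> < freq_radius n"
        using n by (intro abs_freq_minus_less) auto
    qed
  qed simp
qed

section \<open>The lower bound\<close>

lemma cylinder_eq_Collect:
  "cylinder m y k = {z \<in> space (bernoulli m p). \<forall>i\<in>{..<k}. z i \<in> {y i}}"
  by (auto simp: cylinder_def space_bernoulli)

lemma sets_cylinder_bernoulli:
  assumes "y \<in> Sigma m"
  shows "cylinder m y k \<in> sets (bernoulli m p)"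
  unfolding cylinder_eq_Collect[of m y k p]
proof (rule sets.sets_Collect_finite_All)
  fix i
  have "{z \<in> space (bernoulli m p). z i \<in> {y i}} = (\<lambda>z. z i) -` {y i} \<inter> space (bernoulli m p)"
    by auto
  also have "\<dots> \<in> sets (bernoulli m p)"
    using assms by (intro measurable_sets[OF measurable_coordinate_bernoulli]) (simp add: Sigma_def)
  finally show "{z \<in> space (bernoulli m p). z i \<in> {y i}} \<in> sets (bernoulli m p)" .
qed simp

lemma emeasure_cylinder_bernoulli:
  assumes p: "prob_vec m p" and y: "y \<in> Sigma m"
  shows "emeasure (bernoulli m p) (cylinder m y k) = ennreal (\<Prod>i<k. p (y i))"
proof -
  interpret prob_space "marginal m p"
    using prob_space_marginal[OF p] .
  interpret product_prob_space "\<lambda>_. marginal m p" UNIV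
    by unfold_locales
  have y_less: "y i < m" for i
    using y by (simp add: Sigma_def)
  have "emeasure (bernoulli m p) (cylinder m y k) = (\<Prod>i<k. emeasure (marginal m p) {y i})"
    unfolding cylinder_eq_Collect[of m y k p] bernoulli_eq_PiM_marginal
    by (rule emeasure_PiM_Collect) (auto simp: y_less)
  also have "\<dots> = ennreal (\<Prod>i<k. p (y i))"
    using p y_less by (simp add: emeasure_marginal_singleton prod_ennreal prob_vec_def)
  finally show ?thesis .
qed

lemma emeasure_UN_le_infsum:
  assumes "countable I" "\<And>i. i \<in> I \<Longrightarrow> A i \<in> sets M"
  shows "emeasure M (\<Union>i\<in>I. A i) \<le> (\<Sum>\<^sub>\<infinity>i\<in>I. emeasure M (A i))"
proof (cases "I = {}")
  case False
  define f where "f = from_nat_into I"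
  have range_f: "range f = I"
    unfolding f_def using False assms(1) by simp
  define B where "B n = (\<Union>i\<in>f ` {..<n}. A i)" for n
  have "(\<Union>i\<in>I. A i) = (\<Union>n. B n)"
    unfolding B_def using range_f by (auto simp flip: range_f)
  moreover have "range B \<subseteq> sets M"
    using assms(2) range_f by (auto simp: B_def)
  moreover have "incseq B"
    unfolding B_def incseq_def by (auto intro: order_less_le_trans)
  ultimately have "emeasure M (\<Union>i\<in>I. A i) = (SUP n. emeasure M (B n))"
    by (simp add: SUP_emeasure_incseq)
  also have "\<dots> \<le> (\<Sum>\<^sub>\<infinity>i\<in>I. emeasure M (A i))"
  proof (rule SUP_least)
    fix n
    have "emeasure M (B n) \<le> (\<Sum>i\<in>f ` {..<n}. emeasure M (A i))"
      unfolding B_def using assms(2) range_f by (intro emeasure_subadditive_finite) auto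
    also have "\<dots> \<le> (\<Sum>\<^sub>\<infinity>i\<in>I. emeasure M (A i))"
      using range_f by (intro ennreal_sum_le_infsum) auto
    finally show "emeasure M (B n) \<le> (\<Sum>\<^sub>\<infinity>i\<in>I. emeasure M (A i))" .
  qed
  finally show ?thesis .
qed simp

text \<open>Mass distribution principle: a set of positive measure all of whose length-\<open>k\<close>
  cylinders have mass at most \<open>e\<^sup>-\<^sup>s\<^sup>k\<close> gives a lower bound for every Bowen-ball cover, because
  for \<open>eps \<le> 1\<close> the ball \<open>B\<^sub>k(x, eps)\<close> lies in the cylinder of length \<open>k\<close> around any of its points.\<close>

lemma emeasure_le_bowen_Hn:
  assumes sets: "\<And>y k. y \<in> G \<Longrightarrow> cylinder m y k \<in> sets M" and "eps \<le> 1" "G \<subseteq> Z"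
    and mass: "\<And>y k. y \<in> G \<Longrightarrow> n \<le> k \<Longrightarrow> emeasure M (cylinder m y k) \<le> ennreal (exp (- s * real k))"
  shows "emeasure M G \<le> bowen_Hn m Z s eps n"
  unfolding bowen_Hn_def
proof (rule INF_greatest, safe)
  fix C assume C: "countable C" "C \<subseteq> Sigma m \<times> {n..}" "Z \<subseteq> (\<Union>(x,k)\<in>C. bowen_ball m k x eps)"
  define D where "D = {c \<in> C. bowen_ball m (snd c) (fst c) eps \<inter> G \<noteq> {}}"
  have "\<forall>c\<in>D. \<exists>z. z \<in> bowen_ball m (snd c) (fst c) eps \<inter> G"
    by (auto simp: D_def)
  then obtain y where y: "\<And>c. c \<in> D \<Longrightarrow> y c \<in> bowen_ball m (snd c) (fst c) eps \<inter> G"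
    by metis
  have D: "countable D" "D \<subseteq> C"
    using countable_subset[OF _ C(1)] by (auto simp: D_def)
  have "G \<subseteq> (\<Union>c\<in>D. cylinder m (y c) (snd c))"
  proof
    fix z assume "z \<in> G"
    then have "z \<in> Z"
      using assms(3) by blast
    then obtain c where "c \<in> C" and z: "z \<in> bowen_ball m (snd c) (fst c) eps"
      using C(3) by force
    then have "c \<in> D"
      using \<open>z \<in> G\<close> by (auto simp: D_def)
    have "z \<in> cylinder m (fst c) (snd c)" "y c \<in> cylinder m (fst c) (snd c)"
      using z y[OF \<open>c \<in> D\<close>] bowen_ball_subset_cylinder[OF assms(2)] by blast+
    then have "z \<in> cylinder m (y c) (snd c)"
      by (simp add: cylinder_def)
    then show "z \<in> (\<Union>c\<in>D. cylinder m (y c) (snd c))"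
      using \<open>c \<in> D\<close> by blast
  qed
  then have "emeasure M G \<le> emeasure M (\<Union>c\<in>D. cylinder m (y c) (snd c))"
    using D(1) sets y by (intro emeasure_mono sets.countable_UN'') auto
  also have "\<dots> \<le> (\<Sum>\<^sub>\<infinity>c\<in>D. emeasure M (cylinder m (y c) (snd c)))"
    using D(1) sets y by (intro emeasure_UN_le_infsum) auto
  also have "\<dots> \<le> (\<Sum>\<^sub>\<infinity>c\<in>D. ennreal (exp (- s * real (snd c))))"
  proof (rule infsum_mono)
    fix c assume "c \<in> D"
    then have "y c \<in> G" "n \<le> snd c"
      using y D(2) C(2) by auto
    then show "emeasure M (cylinder m (y c) (snd c)) \<le> ennreal (exp (- s * real (snd c)))"
      by (rule mass)
  qed (rule summable_on_ennreal_valued)+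
  also have "\<dots> \<le> (\<Sum>\<^sub>\<infinity>(x,k)\<in>C. ennreal (exp (- s * real k)))"
    using D(2) by (intro infsum_mono_neutral summable_on_ennreal_valued) (auto simp: split_def)
  finally show "emeasure M G \<le> (\<Sum>\<^sub>\<infinity>(x,k)\<in>C. ennreal (exp (- s * real k)))" .
qed

lemma prod_subset_le:
  fixes a :: "'a \<Rightarrow> real"
  assumes "finite B" "A \<subseteq> B" "\<And>i. i \<in> B \<Longrightarrow> 0 \<le> a i \<and> a i \<le> 1"
  shows "(\<Prod>i\<in>B. a i) \<le> (\<Prod>i\<in>A. a i)"
proof -
  have "(\<Prod>i\<in>B. a i) = (\<Prod>i\<in>B - A. a i) * (\<Prod>i\<in>A. a i)"
    by (rule prod.subset_diff[OF assms(2,1)])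
  also have "\<dots> \<le> 1 * (\<Prod>i\<in>A. a i)"
    using assms by (intro mult_right_mono prod_le_1 prod_nonneg) auto
  finally show ?thesis
    by simp
qed

lemma prod_le_exp_sum_ln:
  assumes "finite I" "\<And>i. i \<in> I \<Longrightarrow> 0 \<le> (a i :: real)"
  shows "(\<Prod>i\<in>I. a i) \<le> exp (\<Sum>i\<in>I. ln (a i))"
proof (cases "\<exists>i\<in>I. a i = 0")
  case True
  then have "(\<Prod>i\<in>I. a i) = 0"
    using assms(1) by simp
  then show ?thesis
    by simp
next
  case False
  then have "(\<Prod>i\<in>I. a i) = (\<Prod>i\<in>I. exp (ln (a i)))"
    using assms(2) by (intro prod.cong) (auto simp: order_le_less)
  then show ?thesis
    using assms(1) by (simp add: exp_sum)
qed

lemma sum_ln_freq_le: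
  assumes close: "\<And>j. j < m \<Longrightarrow> \<bar>q j - p j\<bar> \<le> d"
  shows "(\<Sum>j<m. ln (p j) * q j) \<le> - H1 m p + d * (\<Sum>j<m. \<bar>ln (p j)\<bar>)"
proof -
  have "ln (p j) * q j \<le> p j * ln (p j) + d * \<bar>ln (p j)\<bar>" if "j < m" for j
  proof -
    have "(q j - p j) * ln (p j) \<le> \<bar>q j - p j\<bar> * \<bar>ln (p j)\<bar>"
      by (metis abs_ge_self abs_mult)
    also have "\<dots> \<le> d * \<bar>ln (p j)\<bar>"
      using close[OF that] by (intro mult_right_mono) auto
    finally show ?thesis
      by (simp add: algebra_simps)
  qed
  then have "(\<Sum>j<m. ln (p j) * q j) \<le> (\<Sum>j<m. p j * ln (p j) + d * \<bar>ln (p j)\<bar>)"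
    by (intro sum_mono) simp
  also have "\<dots> = - H1 m p + d * (\<Sum>j<m. \<bar>ln (p j)\<bar>)"
    by (simp add: H1_eq sum.distrib sum_distrib_left)
  finally show ?thesis .
qed

text \<open>The \<open>\<mu>\<^sub>p\<close>-mass of the word \<open>y\<^sub>1 \<dots> y\<^sub>n\<close> is \<open>exp (n \<Sum>\<^sub>j f\<^sub>j ln p\<^sub>j)\<close> with \<open>f = f\<^sub>n(y)\<close>, unless a
  letter has probability \<open>0\<close> (then the mass is \<open>0\<close>, while \<open>ln 0 = 0\<close> in HOL).\<close>

lemma emeasure_cylinder_le_exp:
  assumes p: "prob_vec m p" and y: "y \<in> Sigma m" and "n \<ge> 1"
    and close: "\<And>j. j < m \<Longrightarrow> \<bar>freq n y j - p j\<bar> \<le> d"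
    and d: "d * (\<Sum>j<m. \<bar>ln (p j)\<bar>) \<le> H1 m p - s"
  shows "emeasure (bernoulli m p) (cylinder m y (Suc n)) \<le> ennreal (exp s * exp (- s * real (Suc n)))"
proof -
  have digits: "y ` I \<subseteq> {..<m}" for I
    using y by (auto simp: Sigma_def)
  have p01: "0 \<le> p (y i) \<and> p (y i) \<le> 1" for i
    using digits[of "{i}"] p prob_vec_nonneg prob_vec_le_1 by blast
  have "(\<Sum>i\<in>{1..n}. ln (p (y i))) = real n * (\<Sum>j<m. ln (p j) * freq n y j)"
    using sum_freq_by_digit[OF digits, of "\<lambda>j. ln (p j)" n] \<open>n \<ge> 1\<close> by simp
  also have "\<dots> \<le> real n * (- s)"
  proof (rule mult_left_mono)
    show "(\<Sum>j<m. ln (p j) * freq n y j) \<le> - s"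
      using sum_ln_freq_le[of m "freq n y" p d, OF close] d by linarith
  qed simp
  finally have "exp (\<Sum>i\<in>{1..n}. ln (p (y i))) \<le> exp s * exp (- s * real (Suc n))"
    by (simp add: algebra_simps flip: exp_add)
  moreover have "(\<Prod>i\<in>{1..n}. p (y i)) \<le> exp (\<Sum>i\<in>{1..n}. ln (p (y i)))"
    using p01 by (intro prod_le_exp_sum_ln) auto
  moreover have "(\<Prod>i<Suc n. p (y i)) \<le> (\<Prod>i\<in>{1..n}. p (y i))"
    using p01 by (intro prod_subset_le) auto
  ultimately have "(\<Prod>i<Suc n. p (y i)) \<le> exp s * exp (- s * real (Suc n))"
    by linarith
  then show ?thesis
    using emeasure_cylinder_bernoulli[OF p y] by (simp add: ennreal_leI)
qed

lemma freq_tendsto_if_close: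
  assumes "\<And>n. n \<ge> N \<Longrightarrow> \<bar>freq n x j - p j\<bar> < freq_radius n"
  shows "(\<lambda>n. freq n x j) \<longlonglongrightarrow> p j"
proof (rule LIM_zero_cancel, rule Lim_null_comparison[OF _ freq_radius_tendsto_0])
  show "eventually (\<lambda>n. norm (freq n x j - p j) \<le> freq_radius n) sequentially"
    using assms by (intro eventually_sequentiallyI[of N]) (simp add: less_imp_le)
qed

text \<open>The typical points of \<open>\<mu>\<^sub>p\<close> carry positive mass and their cylinders of length \<open>k\<close> have
  mass at most \<open>e\<^sup>s\<^sup>' e\<^sup>-\<^sup>s\<^sup>'\<^sup>k\<close> for any \<open>s' < H(p)\<close>, so rescaling \<open>\<mu>\<^sub>p\<close> by \<open>e\<^sup>-\<^sup>s\<^sup>'\<close> makes the mass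
  distribution principle applicable.\<close>

lemma bowen_H_ne_0_if_typical:
  assumes p: "prob_vec m p" and "eps \<le> 1" and G: "emeasure (bernoulli m p) G \<noteq> 0" "G \<subseteq> Z" "G \<subseteq> Sigma m"
    and close: "\<And>x n j. x \<in> G \<Longrightarrow> n \<ge> N \<Longrightarrow> j < m \<Longrightarrow> \<bar>freq n x j - p j\<bar> < freq_radius n"
    and "N \<ge> 1" and "s < H1 m p"
  shows "bowen_H m Z s eps \<noteq> 0"
proof -
  define s' where "s' = (H1 m p + s) / 2"
  have "eventually (\<lambda>n. freq_radius n * (\<Sum>j<m. \<bar>ln (p j)\<bar>) < H1 m p - s') sequentially"
    using \<open>s < H1 m p\<close>
    by (intro order_tendstoD(2)[OF tendsto_mult_left_zero[OF freq_radius_tendsto_0]]) (simp add: s'_def)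
  then obtain N1 where N1: "\<And>n. n \<ge> N1 \<Longrightarrow> freq_radius n * (\<Sum>j<m. \<bar>ln (p j)\<bar>) < H1 m p - s'"
    by (auto simp: eventually_sequentially)
  define M where "M = scale_measure (ennreal (exp (- s'))) (bernoulli m p)"
  have "emeasure M (cylinder m y k) \<le> ennreal (exp (- s * real k))"
    if "y \<in> G" "Suc (max N N1) \<le> k" for y k
  proof -
    obtain n where k: "k = Suc n" and n: "max N N1 \<le> n"
      using \<open>Suc (max N N1) \<le> k\<close> by (metis Suc_le_D Suc_le_mono)
    have "emeasure (bernoulli m p) (cylinder m y k) \<le> ennreal (exp s' * exp (- s' * real k))"
      unfolding k using close[OF \<open>y \<in> G\<close>] N1[of n] n \<open>N \<ge> 1\<close> \<open>y \<in> G\<close> G(3)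
      by (intro emeasure_cylinder_le_exp[OF p]) (auto intro: less_imp_le)
    then have "emeasure M (cylinder m y k) \<le> ennreal (exp (- s')) * ennreal (exp s' * exp (- s' * real k))"
      unfolding M_def emeasure_scale_measure by (rule mult_left_mono) simp
    also have "\<dots> = ennreal (exp (- s') * (exp s' * exp (- s' * real k)))"
      by (rule ennreal_mult'[symmetric]) simp
    also have "\<dots> = ennreal (exp (- s' * real k))"
      by (simp flip: exp_add)
    also have "\<dots> \<le> ennreal (exp (- s * real k))"
    proof -
      have "s * real k \<le> s' * real k"
        using \<open>s < H1 m p\<close> by (intro mult_right_mono) (auto simp: s'_def)
      then show ?thesis
        by (intro ennreal_leI) simp
    qed
    finally show ?thesis .
  qed
  then have "emeasure M G \<le> bowen_Hn m Z s eps (Suc (max N N1))"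
    using G \<open>eps \<le> 1\<close> by (intro emeasure_le_bowen_Hn) (auto simp: M_def sets_cylinder_bernoulli)
  also have "\<dots> \<le> bowen_H m Z s eps"
    unfolding bowen_H_eq_SUP by (rule SUP_upper) simp
  finally show ?thesis
    using G(1) by (auto simp: M_def)
qed

lemma htop_eps_ge_H1:
  assumes p: "prob_vec m p" and eps: "eps \<le> 1"
    and typical: "\<And>x. x \<in> Sigma m \<Longrightarrow> \<forall>j<m. (\<lambda>n. freq n x j) \<longlonglongrightarrow> p j \<Longrightarrow> x \<in> Z"
  shows "ereal (H1 m p) \<le> htop_eps m Z eps"
proof -
  obtain G N where G: "emeasure (bernoulli m p) G \<ge> ennreal (1/2)" "N \<ge> 1" "G \<subseteq> Sigma m"
    and close: "\<forall>x\<in>G. \<forall>n\<ge>N. \<forall>j<m. \<bar>freq n x j - p j\<bar> < freq_radius n"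
    by (rule typical_set_exists[OF p])
  have "G \<subseteq> Z"
  proof
    fix x assume "x \<in> G"
    then have "\<forall>j<m. (\<lambda>n. freq n x j) \<longlonglongrightarrow> p j"
      using close by (auto intro: freq_tendsto_if_close)
    then show "x \<in> Z"
      using typical G(3) \<open>x \<in> G\<close> by blast
  qed
  moreover have "emeasure (bernoulli m p) G \<noteq> 0"
    using order.strict_trans2[OF _ G(1), of 0] by (simp add: ennreal_inverse_positive)
  ultimately have "bowen_H m Z s eps \<noteq> 0" if "s < H1 m p" for s
    using bowen_H_ne_0_if_typical[OF p eps _ _ G(3) close[rule_format] G(2) that] by blast
  then show ?thesis
    unfolding htop_eps_def by (intro Inf_greatest) (auto simp: not_less[symmetric])
qed

section \<open>Entropy of the level sets\<close>

lemma E_level_eventually_low_entropy: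
  assumes max: "\<forall>q. prob_vec m q \<and> Aprod m r phi q = alpha \<longrightarrow> H1 m q \<le> h"
    and "h < t" and x: "x \<in> E_level m r phi alpha"
  shows "eventually (\<lambda>n. H1 m (freq n x) \<le> t) sequentially"
proof -
  obtain \<eta> where "\<eta> > 0"
    and \<eta>: "\<And>q. prob_vec m q \<Longrightarrow> \<bar>Aprod m r phi q - alpha\<bar> < \<eta> \<Longrightarrow> H1 m q < h + (t - h)"
    using H1_bounded_near_level[OF max, of "t - h"] \<open>h < t\<close> by auto
  have "x \<in> Sigma m" and lim: "(\<lambda>n. Aprod m r phi (freq n x)) \<longlonglongrightarrow> alpha"
    using x by (auto simp: E_level_eq_freq)
  have "eventually (\<lambda>n. \<bar>Aprod m r phi (freq n x) - alpha\<bar> < \<eta>) sequentially"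
    using lim \<open>\<eta> > 0\<close> by (simp add: tendsto_iff dist_real_def)
  moreover have "eventually (\<lambda>n. 1 \<le> n) sequentially"
    by (rule eventually_ge_at_top)
  ultimately show ?thesis
  proof eventually_elim
    case (elim n)
    then show ?case
      using \<eta>[OF prob_vec_freq[OF digits_below[OF \<open>x \<in> Sigma m\<close>]]] by fastforce
  qed
qed

lemma htop_eq_if_eventually_htop_eps_eq:
  assumes "eventually (\<lambda>eps. htop_eps m Z eps = c) (at_right 0)"
  shows "htop m Z = c"
  unfolding htop_def by (rule tendsto_Lim) (simp_all add: tendsto_eventually[OF assms])

theorem theorem5p3:
  fixes m r :: nat and phi :: "nat \<Rightarrow> nat \<Rightarrow> real"
  assumes "m \<ge> 2" and "r \<ge> 1"
  shows "(\<forall>p. prob_vec m p \<longrightarrow> Aint m r phi p = (\<Prod>k<r. \<Sum>j<m. phi k j * p j))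
       \<and> (\<forall>alpha. E_level m r phi alpha \<noteq> {} \<longrightarrow>
            (\<exists>p. prob_vec m p \<and> Aint m r phi p = alpha
                 \<and> (\<forall>q. prob_vec m q \<and> Aint m r phi q = alpha \<longrightarrow> H1 m q \<le> H1 m p)
                 \<and> htop m (E_level m r phi alpha) = ereal (H1 m p)))"
proof (intro conjI allI impI)
  fix p :: "nat \<Rightarrow> real" assume "prob_vec m p"
  then show "Aint m r phi p = (\<Prod>k<r. \<Sum>j<m. phi k j * p j)"
    by (simp add: Aint_eq_Aprod Aprod_def)
next
  fix alpha assume "E_level m r phi alpha \<noteq> {}"
  then obtain x where "x \<in> Sigma m" "(\<lambda>n. Aprod m r phi (freq n x)) \<longlonglongrightarrow> alpha"
    by (auto simp: E_level_eq_freq)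
  then obtain p where p: "prob_vec m p" "Aprod m r phi p = alpha"
    and max: "\<forall>q. prob_vec m q \<and> Aprod m r phi q = alpha \<longrightarrow> H1 m q \<le> H1 m p"
    using entropy_maximizer_exists[OF Aprod_level_nonempty] by blast
  have "htop_eps m (E_level m r phi alpha) eps = ereal (H1 m p)" if "0 < eps" "eps \<le> 1" for eps
  proof (rule antisym)
    show "htop_eps m (E_level m r phi alpha) eps \<le> ereal (H1 m p)"
      using that E_level_eventually_low_entropy[OF max]
      by (intro htop_eps_le_if_low_entropy) (auto simp: E_level_eq_freq)
    show "ereal (H1 m p) \<le> htop_eps m (E_level m r phi alpha) eps"
      using that p tendsto_Aprod by (intro htop_eps_ge_H1) (auto simp: E_level_eq_freq)
  qed
  then have "htop m (E_level m r phi alpha) = ereal (H1 m p)"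
    by (intro htop_eq_if_eventually_htop_eps_eq) (auto simp: eventually_at_right_field intro!: exI[of _ 1])
  then show "\<exists>p. prob_vec m p \<and> Aint m r phi p = alpha
      \<and> (\<forall>q. prob_vec m q \<and> Aint m r phi q = alpha \<longrightarrow> H1 m q \<le> H1 m p)
      \<and> htop m (E_level m r phi alpha) = ereal (H1 m p)"
    using p max by (intro exI[of _ p]) (auto simp: Aint_eq_Aprod)
qed

end
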